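(* Assume the setting described in the context. Then for every $k\in\mathbb{N}$, $$f^{-k}(U\setminus J_f)=\bigcup_{\epsilon^k\in\Sigma_d^k}\phi(V_{\epsilon^k}).$$
   Context: Setting: $U\subset\mathbb{C}$ is a domain conformally isomorphic to $\mathbb{D}$; $U'=U_1\cup\dots\cup U_N$ is relatively compact in $U$, with the $U_i$ pairwise disjoint domains each conformally isomorphic to $\mathbb{D}$; $f:U'\to U$ is a proper holomorphic map of degree $d>1$ (sum of the degrees of $f:U_i\to U$); $K_f=\{z\in U': f^n(z)\in U'\ \forall n\}$, $J_f=\partial K_f$, and it is assumed that $K_f=J_f$ is a Cantor set containing all critical points of $f$. Fix $w\in U\setminus U'$, let $w_0,\dots,w_{d-1}$ be its $d$ distinct preimages under $f$, and let $i(j)$ be defined by $w_j\in U_{i(j)}$. Let $\phi:\mathbb{D}\to U\setminus J_f$ be a universal covering with $\phi(0)=w$, and let $\Gamma$ be its deck transformation group. For each $i$ fix a connected component $V_i$ of $\phi^{-1}(U_i\setminus J_f)$, and let $g_0,\dots,g_{d-1}:\mathbb{D}\to\mathbb{D}$ be univalent holomorphic maps with $f\circ\phi\circ g_j=\phi$, $\phi(g_j(0))=w_j$ and $g_j(\mathbb{D})=V_{i(j)}$. Let $\Sigma_d^k=\{0,\dots,d-1\}^k$ and, for $\epsilon^k=(\epsilon_1,\dots,\epsilon_k)$, $\sigma(\epsilon^k)=(\epsilon_2,\dots,\epsilon_k)$. Fix families $\{\gamma_l^{\epsilon^k}\}_{l=1}^k\subset\Gamma$ ($\epsilon^k\in\Sigma_d^k$,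 $k\in\mathbb{N}$) and put $V_{\epsilon^k}=\gamma_1^{\epsilon^k}\circ g_{\epsilon_1}\circ\dots\circ\gamma_k^{\epsilon^k}\circ g_{\epsilon_k}(\mathbb{D})$, such that: (1) $V_{\epsilon^k}\subset V_{\epsilon^{k-1}}$ for $k\ge2$, with $\epsilon^{k-1}=(\epsilon_1,\dots,\epsilon_{k-1})$; (2) $\gamma_l^{\epsilon^k}=\gamma_{l-1}^{\sigma(\epsilon^k)}$ for $k\ge2$, $2\le l\le k$; (3) $\phi(V_{\epsilon^k})=\phi(V_{\widehat\epsilon^k})$ implies $V_{\epsilon^k}=V_{\widehat\epsilon^k}$ (such families exist). *)

theory Defs
  imports "HOL-Complex_Analysis.Complex_Analysis"
begin

abbreviation unit_disc :: "complex set" where "unit_disc \<equiv> ball 0 1"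

definition conf_disc :: "complex set \<Rightarrow> bool" where
  "conf_disc U \<longleftrightarrow> open U \<and> connected U \<and>
     (\<exists>h h'. h holomorphic_on unit_disc \<and> h' holomorphic_on U \<and>
        h ` unit_disc = U \<and> h' ` U = unit_disc \<and>
        (\<forall>z\<in>unit_disc. h' (h z) = z) \<and> (\<forall>u\<in>U. h (h' u) = u))"

definition proper_map_on :: "(complex \<Rightarrow> complex) \<Rightarrow> complex set \<Rightarrow> complex set \<Rightarrow> bool" where
  "proper_map_on f S T \<longleftrightarrow> f ` S \<subseteq> T \<and>
     (\<forall>K. compact K \<and> K \<subseteq> T \<longrightarrow> compact {z\<in>S. f z \<in> K})"

definition deg_count :: "(complex \<Rightarrow> complex) \<Rightarrow> complex set \<Rightarrow> complex \<Rightarrow> nat" where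
  "deg_count f S w = (\<Sum>z\<in>{z\<in>S. f z = w}. nat (zorder (\<lambda>x. f x - w) z))"

definition filled_set :: "(complex \<Rightarrow> complex) \<Rightarrow> complex set \<Rightarrow> complex set" where
  "filled_set f U' = {z\<in>U'. \<forall>n. (f ^^ n) z \<in> U'}"

definition cantor_set :: "complex set \<Rightarrow> bool" where
  "cantor_set K \<longleftrightarrow> K \<noteq> {} \<and> compact K \<and> (\<forall>x\<in>K. x islimpt K) \<and>
     (\<forall>C. C \<subseteq> K \<and> connected C \<longrightarrow> (\<exists>a. C \<subseteq> {a}))"

definition deck_group :: "(complex \<Rightarrow> complex) \<Rightarrow> (complex \<Rightarrow> complex) set" where
  "deck_group phi = {\<gamma>. (\<exists>\<gamma>'. homeomorphism unit_disc unit_disc \<gamma> \<gamma>') \<and>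
                        (\<forall>z\<in>unit_disc. phi (\<gamma> z) = phi z)}"

definition Sigma_words :: "nat \<Rightarrow> nat \<Rightarrow> nat list set" where
  "Sigma_words d k = {es. length es = k \<and> (\<forall>e\<in>set es. e < d)}"

text \<open>V_eps = gamma_1 o g_{eps_1} o ... o gamma_k o g_{eps_k} (unit disc).\<close>
definition V_word :: "(nat list \<Rightarrow> nat \<Rightarrow> complex \<Rightarrow> complex) \<Rightarrow> (nat \<Rightarrow> complex \<Rightarrow> complex)
                      \<Rightarrow> nat list \<Rightarrow> complex set" where
  "V_word gam g es =
     foldr (\<circ>) (map (\<lambda>l. gam es (Suc l) \<circ> g (es ! l)) [0..<length es]) id ` unit_disc"

definition preimage_iter :: "(complex \<Rightarrow> complex) \<Rightarrow> complex set \<Rightarrow> nat \<Rightarrow> complex set \<Rightarrow> complex set" where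
  "preimage_iter f U' k A = {z. (\<forall>j<k. (f ^^ j) z \<in> U') \<and> (f ^^ k) z \<in> A}"

end

theory Submission
  imports Defs
begin

text \<open>Every point of \<open>U - J\<close> is \<open>\<phi> y\<close>, and the preimages of \<open>\<phi> y\<close> under \<open>f\<close> are exactly the
  \<open>d\<close> points \<open>\<phi> (g\<^sub>j y)\<close>: these lifts are pairwise distinct at \<open>0\<close>, hence everywhere (lifts through
  the locally injective \<open>f\<close> agreeing at one point of the connected disc agree everywhere); they are
  simple zeros of \<open>f - \<phi> y\<close> because \<open>f\<close> has no critical points off \<open>K\<close>, and the fibre has degree \<open>d\<close>,
  so there is no room for another preimage. Since deck transformations preserve \<open>\<phi>\<close> and condition
  (2) identifies the tail of the word map of \<open>e\<epsilon>\<close> with the word map of \<open>\<epsilon>\<close>, one gets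
  \<open>\<phi>(V\<^bsub>e\<epsilon>\<^esub>) = \<phi>(g\<^sub>e(V\<^sub>\<epsilon>))\<close>, and the theorem follows by induction on \<open>k\<close>.\<close>

lemma zorder_eq_1_if_deriv_nonzero:
  assumes "f holomorphic_on S" "open S" "x \<in> S" "deriv f x \<noteq> 0" "f x = v"
  shows "zorder (\<lambda>u. f u - v) x = 1"
proof -
  have "(f has_field_derivative deriv f x) (at x)"
    using assms holomorphic_derivI by blast
  then have "((\<lambda>u. f u - v) has_field_derivative deriv f x) (at x)"
    by (auto intro!: derivative_eq_intros)
  then have "deriv (\<lambda>u. f u - v) x = deriv f x"
    by (rule DERIV_imp_deriv)
  then show ?thesis
    by (intro zorder_zero_eqI[of _ S]) (use assms in \<open>auto intro!: holomorphic_intros\<close>)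
qed

lemma card_le_deg_count:
  assumes deg: "deg_count f A v = d" and "d > 0"
    and P: "P \<subseteq> {x\<in>A. f x = v}" and simple: "\<And>x. x \<in> P \<Longrightarrow> zorder (\<lambda>u. f u - v) x = 1"
  shows "card P \<le> d"
proof -
  let ?mult = "\<lambda>x. nat (zorder (\<lambda>u. f u - v) x)"
  have "finite {x\<in>A. f x = v}"
  proof (rule ccontr)
    assume "infinite {x\<in>A. f x = v}"
    then have "deg_count f A v = 0"
      unfolding deg_count_def by (rule sum.infinite)
    with deg \<open>d > 0\<close> show False
      by simp
  qed
  then have "sum ?mult P \<le> deg_count f A v"
    unfolding deg_count_def using P by (rule sum_mono2) simp
  also have "sum ?mult P = sum (\<lambda>_. 1) P"
    using simple by (intro sum.cong) auto
  finally show ?thesis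
    using deg by simp
qed

lemma lifts_eq_if_eq_at:
  fixes f :: "complex \<Rightarrow> complex"
  assumes "open A" "f holomorphic_on A" "connected S"
    and cont: "continuous_on S h1" "continuous_on S h2"
    and h1: "\<And>x. x \<in> S \<Longrightarrow> h1 x \<in> A \<and> deriv f (h1 x) \<noteq> 0"
    and lift: "\<And>x. x \<in> S \<Longrightarrow> f (h1 x) = f (h2 x)"
    and "a \<in> S" "h1 a = h2 a" "x \<in> S"
  shows "h1 x = h2 x"
proof -
  define E where "E = {u\<in>S. h1 u - h2 u = 0}"
  have "closedin (top_of_set S) E"
    unfolding E_def by (intro continuous_closedin_preimage_constant continuous_intros cont)
  moreover have "openin (top_of_set S) E"
  proof (subst openin_subopen, intro ballI)
    fix u assume "u \<in> E"
    then have u: "u \<in> S" "h1 u = h2 u"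
      unfolding E_def by auto
    obtain r where r: "r > 0" "inj_on f (ball (h1 u) r)"
      using has_complex_derivative_locally_injective[of f A "h1 u"] assms h1[OF u(1)] by metis
    define T where "T = (S \<inter> h1 -` ball (h1 u) r) \<inter> (S \<inter> h2 -` ball (h1 u) r)"
    have "openin (top_of_set S) T"
      unfolding T_def by (intro openin_Int continuous_openin_preimage_gen cont) auto
    moreover have "u \<in> T"
      using u r unfolding T_def by auto
    moreover have "T \<subseteq> E"
      using r(2) lift unfolding T_def E_def inj_on_def by auto
    ultimately show "\<exists>T. openin (top_of_set S) T \<and> u \<in> T \<and> T \<subseteq> E"
      by blast
  qed
  moreover have "a \<in> E"
    using assms unfolding E_def by simp
  ultimately have "E = S"
    using \<open>connected S\<close> unfolding connected_clopen by blast
  then show ?thesis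
    using \<open>x \<in> S\<close> unfolding E_def by auto
qed

lemma lifts_exhaust_fibre:
  fixes f :: "complex \<Rightarrow> complex" and h :: "nat \<Rightarrow> complex \<Rightarrow> complex"
  assumes "open A" "f holomorphic_on A" "connected S"
    and cont: "\<And>j. j < d \<Longrightarrow> continuous_on S (h j)"
    and h: "\<And>j x. j < d \<Longrightarrow> x \<in> S \<Longrightarrow> h j x \<in> A \<and> deriv f (h j x) \<noteq> 0"
    and lift: "\<And>j x. j < d \<Longrightarrow> x \<in> S \<Longrightarrow> f (h j x) = p x"
    and "a \<in> S" and distinct: "inj_on (\<lambda>j. h j a) {..<d}"
    and deg: "deg_count f A (p y) = d" "d > 0"
    and "y \<in> S" and z: "z \<in> A" "deriv f z \<noteq> 0" "f z = p y"
  shows "\<exists>j<d. h j y = z"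
proof (rule ccontr)
  assume z_new: "\<not> (\<exists>j<d. h j y = z)"
  have "inj_on (\<lambda>j. h j y) {..<d}"
  proof (rule inj_onI, rule ccontr)
    fix j j' assume jj: "j \<in> {..<d}" "j' \<in> {..<d}" "h j y = h j' y" "j \<noteq> j'"
    have "h j a = h j' a"
      by (rule lifts_eq_if_eq_at[of A f S "h j" "h j'" y])
        (use assms jj in auto)
    then show False
      using distinct jj unfolding inj_on_def by blast
  qed
  then have "card (insert z ((\<lambda>j. h j y) ` {..<d})) = Suc d"
    using z_new by (subst card_insert_disjoint) (auto simp: card_image)
  moreover have "card (insert z ((\<lambda>j. h j y) ` {..<d})) \<le> d"
  proof (rule card_le_deg_count[OF deg])
    show "insert z ((\<lambda>j. h j y) ` {..<d}) \<subseteq> {x\<in>A. f x = p y}"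
      using h lift z \<open>y \<in> S\<close> by auto
    show "zorder (\<lambda>u. f u - p y) x = 1" if "x \<in> insert z ((\<lambda>j. h j y) ` {..<d})" for x
      using that h lift z \<open>y \<in> S\<close>
      by (auto intro!: zorder_eq_1_if_deriv_nonzero[of f A] \<open>open A\<close> \<open>f holomorphic_on A\<close>)
  qed
  ultimately show False
    by simp
qed

lemma funpow_Suc_apply: "(f ^^ Suc n) z = (f ^^ n) (f z)"
  by (simp only: funpow_Suc_right comp_apply)

lemma filled_set_forward_invariant:
  assumes "z \<in> filled_set f A"
  shows "f z \<in> filled_set f A"
proof -
  have iter: "(f ^^ Suc n) z \<in> A" for n
    using assms unfolding filled_set_def by blast
  then have "(f ^^ n) (f z) \<in> A" for n
    by (simp only: funpow_Suc_apply[symmetric])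
  moreover have "f z \<in> A"
    using iter[of 0] by simp
  ultimately show ?thesis
    unfolding filled_set_def by blast
qed

lemma preimage_iter_0 [simp]: "preimage_iter f A 0 B = B"
  by (simp add: preimage_iter_def)

lemma preimage_iter_Suc: "preimage_iter f A (Suc k) B = {z\<in>A. f z \<in> preimage_iter f A k B}"
  unfolding preimage_iter_def All_less_Suc2 funpow_Suc_apply by simp

lemma Sigma_words_0 [simp]: "Sigma_words d 0 = {[]}"
  by (auto simp: Sigma_words_def)

lemma Cons_in_Sigma_words_iff: "e # es \<in> Sigma_words d (Suc k) \<longleftrightarrow> e < d \<and> es \<in> Sigma_words d k"
  by (auto simp: Sigma_words_def)

lemma deck_group_maps_disc: "\<gamma> \<in> deck_group phi \<Longrightarrow> x \<in> unit_disc \<Longrightarrow> \<gamma> x \<in> unit_disc"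
  unfolding deck_group_def homeomorphism_def by blast

lemma deck_group_invariant: "\<gamma> \<in> deck_group phi \<Longrightarrow> x \<in> unit_disc \<Longrightarrow> phi (\<gamma> x) = phi x"
  unfolding deck_group_def by blast

lemma foldr_comp_upt_Suc:
  "foldr (\<circ>) (map F [0..<Suc n]) id = F 0 \<circ> foldr (\<circ>) (map (\<lambda>l. F (Suc l)) [0..<n]) id"
  by (simp only: map_upt_Suc foldr_Cons o_def)

lemma foldr_comp_upt_in:
  assumes "\<And>l x. l < n \<Longrightarrow> x \<in> S \<Longrightarrow> F l x \<in> S" "x \<in> S"
  shows "foldr (\<circ>) (map F [0..<n]) id x \<in> S"
  using assms by (induction n arbitrary: F) (auto simp: foldr_comp_upt_Suc simp del: upt_Suc)

lemma foldr_comp_upt_cong: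
  assumes "\<And>l x. l < n \<Longrightarrow> x \<in> S \<Longrightarrow> F l x = G l x" "\<And>l x. l < n \<Longrightarrow> x \<in> S \<Longrightarrow> G l x \<in> S"
    and "x \<in> S"
  shows "foldr (\<circ>) (map F [0..<n]) id x = foldr (\<circ>) (map G [0..<n]) id x"
  using assms
proof (induction n arbitrary: F G)
  case (Suc n)
  have "foldr (\<circ>) (map (\<lambda>l. F (Suc l)) [0..<n]) id x = foldr (\<circ>) (map (\<lambda>l. G (Suc l)) [0..<n]) id x"
    by (rule Suc.IH) (use Suc.prems in auto)
  moreover have "foldr (\<circ>) (map (\<lambda>l. G (Suc l)) [0..<n]) id x \<in> S"
    by (rule foldr_comp_upt_in) (use Suc.prems in auto)
  ultimately show ?case
    using Suc.prems unfolding foldr_comp_upt_Suc by simp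
qed simp

definition word_map :: "(nat list \<Rightarrow> nat \<Rightarrow> complex \<Rightarrow> complex) \<Rightarrow> (nat \<Rightarrow> complex \<Rightarrow> complex)
    \<Rightarrow> nat list \<Rightarrow> complex \<Rightarrow> complex" where
  "word_map gam g es = foldr (\<circ>) (map (\<lambda>l. gam es (Suc l) \<circ> g (es ! l)) [0..<length es]) id"

lemma V_word_eq_image_word_map: "V_word gam g es = word_map gam g es ` unit_disc"
  by (simp add: V_word_def word_map_def)

locale lifted_words =
  fixes f phi :: "complex \<Rightarrow> complex" and A :: "complex set" and d :: nat
    and g :: "nat \<Rightarrow> complex \<Rightarrow> complex" and gam :: "nat list \<Rightarrow> nat \<Rightarrow> complex \<Rightarrow> complex"
  assumes g_in_disc: "\<And>j x. j < d \<Longrightarrow> x \<in> unit_disc \<Longrightarrow> g j x \<in> unit_disc"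
    and lift_in: "\<And>j x. j < d \<Longrightarrow> x \<in> unit_disc \<Longrightarrow> phi (g j x) \<in> A"
    and lift: "\<And>j x. j < d \<Longrightarrow> x \<in> unit_disc \<Longrightarrow> f (phi (g j x)) = phi x"
    and gam_deck: "\<And>es l. es \<in> Sigma_words d (length es) \<Longrightarrow> 1 \<le> l \<Longrightarrow> l \<le> length es
                     \<Longrightarrow> gam es l \<in> deck_group phi"
    and gam_shift: "\<And>es l z. es \<in> Sigma_words d (length es) \<Longrightarrow> length es \<ge> 2
                  \<Longrightarrow> 2 \<le> l \<Longrightarrow> l \<le> length es \<Longrightarrow> z \<in> unit_disc
                  \<Longrightarrow> gam es l z = gam (tl es) (l - 1) z"
    and lifts_exhaust: "\<And>z y. z \<in> A \<Longrightarrow> y \<in> unit_disc \<Longrightarrow> f z = phi y \<Longrightarrow> \<exists>j<d. phi (g j y) = z"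
begin

lemma letter_map_in_disc:
  assumes "es \<in> Sigma_words d (length es)" "l < length es" "x \<in> unit_disc"
  shows "gam es (Suc l) (g (es ! l) x) \<in> unit_disc"
proof -
  have "es ! l < d"
    using assms unfolding Sigma_words_def by auto
  then show ?thesis
    using assms by (intro deck_group_maps_disc[OF gam_deck] g_in_disc) auto
qed

lemma word_map_in_disc:
  assumes "es \<in> Sigma_words d (length es)" "x \<in> unit_disc"
  shows "word_map gam g es x \<in> unit_disc"
  unfolding word_map_def
proof (rule foldr_comp_upt_in[OF _ assms(2)])
  fix l u assume "l < length es" "u \<in> unit_disc"
  then show "(gam es (Suc l) \<circ> g (es ! l)) u \<in> unit_disc"
    using letter_map_in_disc[OF assms(1)] by simp
qed

lemma word_map_Cons:
  assumes es: "e # es \<in> Sigma_words d (Suc (length es))" and "x \<in> unit_disc"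
  shows "word_map gam g (e # es) x = gam (e # es) 1 (g e (word_map gam g es x))"
proof -
  have es': "es \<in> Sigma_words d (length es)"
    using es by (simp add: Cons_in_Sigma_words_iff)
  have "foldr (\<circ>) (map (\<lambda>l. gam (e # es) (Suc (Suc l)) \<circ> g (es ! l)) [0..<length es]) id x
      = word_map gam g es x"
    unfolding word_map_def
  proof (rule foldr_comp_upt_cong[where S = unit_disc])
    fix l u assume "l < length es" "u \<in> unit_disc"
    moreover have "es ! l < d"
      using es' \<open>l < length es\<close> unfolding Sigma_words_def by auto
    ultimately show "(gam (e # es) (Suc (Suc l)) \<circ> g (es ! l)) u = (gam es (Suc l) \<circ> g (es ! l)) u"
      using gam_shift[of "e # es" "Suc (Suc l)"] es g_in_disc by simp
    show "(gam es (Suc l) \<circ> g (es ! l)) u \<in> unit_disc"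
      using es' \<open>l < length es\<close> \<open>u \<in> unit_disc\<close> letter_map_in_disc by simp
  qed (use \<open>x \<in> unit_disc\<close> in simp)
  then show ?thesis
    by (simp add: word_map_def foldr_comp_upt_Suc del: upt_Suc)
qed

lemma phi_word_map_Cons:
  assumes "e # es \<in> Sigma_words d (Suc (length es))" "x \<in> unit_disc"
  shows "phi (word_map gam g (e # es) x) = phi (g e (word_map gam g es x))"
proof -
  have "e < d" "es \<in> Sigma_words d (length es)"
    using assms(1) by (simp_all add: Cons_in_Sigma_words_iff)
  then have "g e (word_map gam g es x) \<in> unit_disc"
    using assms(2) by (intro g_in_disc word_map_in_disc)
  moreover have "gam (e # es) 1 \<in> deck_group phi"
    using assms(1) by (intro gam_deck) auto
  ultimately show ?thesis
    unfolding word_map_Cons[OF assms] by (rule deck_group_invariant[rotated])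
qed

theorem preimage_iter_eq_Union_V_word:
  "preimage_iter f A k (phi ` unit_disc) = (\<Union>es\<in>Sigma_words d k. phi ` V_word gam g es)"
proof (induction k)
  case 0
  then show ?case
    by (simp add: V_word_def)
next
  case (Suc k)
  show ?case
  proof (intro equalityI subsetI)
    fix z assume "z \<in> preimage_iter f A (Suc k) (phi ` unit_disc)"
    then obtain es x where z: "z \<in> A" and es: "es \<in> Sigma_words d k" and x: "x \<in> unit_disc"
      and fz: "f z = phi (word_map gam g es x)"
      unfolding preimage_iter_Suc Suc.IH V_word_eq_image_word_map by blast
    have len: "length es = k"
      using es by (simp add: Sigma_words_def)
    then have y: "word_map gam g es x \<in> unit_disc"
      using es x word_map_in_disc by simp
    obtain e where "e < d" and e: "phi (g e (word_map gam g es x)) = z"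
      using lifts_exhaust[OF z y fz] by blast
    then have ees: "e # es \<in> Sigma_words d (Suc k)"
      using es by (simp add: Cons_in_Sigma_words_iff)
    then have "z = phi (word_map gam g (e # es) x)"
      using phi_word_map_Cons[of e es x] x e len by simp
    then show "z \<in> (\<Union>es\<in>Sigma_words d (Suc k). phi ` V_word gam g es)"
      using ees x unfolding V_word_eq_image_word_map by blast
  next
    fix z assume "z \<in> (\<Union>es\<in>Sigma_words d (Suc k). phi ` V_word gam g es)"
    then obtain es x where es: "es \<in> Sigma_words d (Suc k)" and x: "x \<in> unit_disc"
      and z: "z = phi (word_map gam g es x)"
      unfolding V_word_eq_image_word_map by blast
    then obtain e es' where es_eq: "es = e # es'"
      by (cases es) (auto simp: Sigma_words_def)
    have e: "e < d" and es': "es' \<in> Sigma_words d k" "length es' = k"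
      using es unfolding es_eq Cons_in_Sigma_words_iff by (auto simp: Sigma_words_def)
    have y: "word_map gam g es' x \<in> unit_disc"
      using es' x word_map_in_disc by simp
    have z': "z = phi (g e (word_map gam g es' x))"
      using z es x phi_word_map_Cons[of e es' x] unfolding es_eq es'(2) by simp
    have "f z \<in> phi ` V_word gam g es'"
      using lift[OF e y] x unfolding z' V_word_eq_image_word_map by blast
    then show "z \<in> preimage_iter f A (Suc k) (phi ` unit_disc)"
      using lift_in[OF e y] es'(1) unfolding preimage_iter_Suc Suc.IH z' by blast
  qed
qed

end

theorem mainTheorem4:
  fixes U :: "complex set" and Ui :: "nat \<Rightarrow> complex set" and N d :: nat
    and f phi :: "complex \<Rightarrow> complex" and w :: complex
    and ws :: "nat \<Rightarrow> complex" and ii :: "nat \<Rightarrow> nat"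
    and V :: "nat \<Rightarrow> complex set" and g :: "nat \<Rightarrow> complex \<Rightarrow> complex"
    and gam :: "nat list \<Rightarrow> nat \<Rightarrow> complex \<Rightarrow> complex"
  defines "U' \<equiv> (\<Union>i<N. Ui i)"
  defines "K \<equiv> filled_set f U'"
  defines "J \<equiv> frontier K"
  assumes U: "conf_disc U"
    and Ui: "\<And>i. i < N \<Longrightarrow> conf_disc (Ui i)"
    and Ui_disj: "\<And>i j. i < N \<Longrightarrow> j < N \<Longrightarrow> i \<noteq> j \<Longrightarrow> Ui i \<inter> Ui j = {}"
    and relcompact: "compact (closure U')" "closure U' \<subseteq> U"
    and f_hol: "f holomorphic_on U'"
    and f_proper: "proper_map_on f U' U"
    and f_deg: "\<And>v. v \<in> U \<Longrightarrow> deg_count f U' v = d"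
    and d_gt: "d > 1"
    and KJ: "K = J"
    and cantor: "cantor_set K"
    and crit: "{z\<in>U'. deriv f z = 0} \<subseteq> K"
    and w: "w \<in> U - U'"
    and ws_pre: "\<And>j. j < d \<Longrightarrow> f (ws j) = w"
    and ws_all: "{z\<in>U'. f z = w} = ws ` {..<d}"
    and ws_inj: "inj_on ws {..<d}"
    and ii: "\<And>j. j < d \<Longrightarrow> ii j < N \<and> ws j \<in> Ui (ii j)"
    and phi_hol: "phi holomorphic_on unit_disc"
    and phi_cov: "covering_space unit_disc phi (U - J)"
    and phi0: "phi 0 = w"
    and V: "\<And>i. i < N \<Longrightarrow> V i \<in> components {z\<in>unit_disc. phi z \<in> Ui i - J}"
    and g_hol: "\<And>j. j < d \<Longrightarrow> g j holomorphic_on unit_disc"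
    and g_inj: "\<And>j. j < d \<Longrightarrow> inj_on (g j) unit_disc"
    and g_lift: "\<And>j z. j < d \<Longrightarrow> z \<in> unit_disc \<Longrightarrow> f (phi (g j z)) = phi z"
    and g0: "\<And>j. j < d \<Longrightarrow> phi (g j 0) = ws j"
    and g_img: "\<And>j. j < d \<Longrightarrow> g j ` unit_disc = V (ii j)"
    and gam_deck: "\<And>es l. es \<in> Sigma_words d (length es) \<Longrightarrow> 1 \<le> l \<Longrightarrow> l \<le> length es
                     \<Longrightarrow> gam es l \<in> deck_group phi"
    and cond1: "\<And>es. es \<in> Sigma_words d (length es) \<Longrightarrow> length es \<ge> 2
                  \<Longrightarrow> V_word gam g es \<subseteq> V_word gam g (butlast es)"
    and cond2: "\<And>es l z. es \<in> Sigma_words d (length es) \<Longrightarrow> length es \<ge> 2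
                  \<Longrightarrow> 2 \<le> l \<Longrightarrow> l \<le> length es \<Longrightarrow> z \<in> unit_disc
                  \<Longrightarrow> gam es l z = gam (tl es) (l - 1) z"
    and cond3: "\<And>es es'. es \<in> Sigma_words d (length es) \<Longrightarrow> es' \<in> Sigma_words d (length es)
                  \<Longrightarrow> phi ` V_word gam g es = phi ` V_word gam g es'
                  \<Longrightarrow> V_word gam g es = V_word gam g es'"
  shows "\<forall>k\<ge>1. preimage_iter f U' k (U - J) = (\<Union>es\<in>Sigma_words d k. phi ` V_word gam g es)"
proof -
  have "J = K"
    using KJ by simp
  have "open U'"
    using Ui unfolding U'_def conf_disc_def by blast
  have phi_disc: "phi ` unit_disc = U - K"
    using covering_space_imp_surjective[OF phi_cov] \<open>J = K\<close> by simp
  have g_into: "g j x \<in> unit_disc \<and> phi (g j x) \<in> U' - K" if "j < d" "x \<in> unit_disc" for j x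
    using V[of "ii j"] ii[OF that(1)] g_img[OF that(1)] that in_components_subset
    unfolding U'_def \<open>J = K\<close> by fastforce
  have lift_noncrit: "phi (g j x) \<in> U' \<and> deriv f (phi (g j x)) \<noteq> 0" if "j < d" "x \<in> unit_disc" for j x
    using g_into[OF that] crit by blast
  have lift_cont: "continuous_on unit_disc (\<lambda>x. phi (g j x))" if "j < d" for j
    using g_into that
    by (intro continuous_on_compose2[OF covering_space_imp_continuous[OF phi_cov]]
        holomorphic_on_imp_continuous_on g_hol) auto
  have lifts_distinct: "inj_on (\<lambda>j. phi (g j 0)) {..<d}"
    using ws_inj g0 by (simp add: inj_on_def)
  interpret lifted_words f phi U' d g gam
  proof
    fix z y assume z: "z \<in> U'" and y: "y \<in> unit_disc" and fz: "f z = phi y"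
    then have "z \<notin> K"
      using phi_disc filled_set_forward_invariant unfolding K_def by fastforce
    then have "deriv f z \<noteq> 0"
      using crit z by blast
    moreover have "deg_count f U' (phi y) = d"
      using f_deg phi_disc y by blast
    ultimately show "\<exists>j<d. phi (g j y) = z"
      using lifts_exhaust_fibre[where h = "\<lambda>j x. phi (g j x)" and p = phi and S = unit_disc and a = 0,
          OF \<open>open U'\<close> f_hol convex_connected[OF convex_ball] lift_cont lift_noncrit g_lift _ lifts_distinct]
        d_gt y z fz by simp
  qed (use g_into g_lift gam_deck cond2 in auto)
  show ?thesis
    using preimage_iter_eq_Union_V_word phi_disc \<open>J = K\<close> by simp
qed

end
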